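(* Let $\varphi$ be any irrevocable (non-wasteful) distribution policy and suppose the characteristic function satisfies $v\in V_1$. Then the competitive ratio of $\varphi$ with respect to greedy players is $\alpha=1$; that is, for every $v\in V_1$ and every arrival order $\pi$, the coalition structure formed by greedy players maximizes social welfare.
   Context: Players: a finite set $N=\{a_1,\dots,a_n\}$. A characteristic function is $v:2^N\to\mathbb{R}_{\ge 0}$ with $v(\emptyset)=0$. There are fixed, known constants $0<\mathsf{min}\le\mathsf{max}$ and every $v$ considered is monotone and bounded: $\mathsf{min}\le v(S)\le v(T)\le\mathsf{max}$ for all nonempty $S\subseteq T\subseteq N$. For an integer $\delta\ge1$, $V_\delta$ denotes the set of such $v$ for which additionally $\delta\cdot\mathsf{min}\le\mathsf{max}<(\delta+1)\cdot\mathsf{min}$. A coalition structure is a partition $C$ of $N$; its social welfare is $\mathsf{SW}(C\mid v)=\sum_{S\in C}v(S)$. Online process: an arrival order is a permutation $\pi=(\pi_1,\dots,\pi_n)$ of $N$; player $\pi_t$ arrives at time $t$. For $S\subseteq N$, $\pi_{|S}$ denotes the players of $S$ in the relative order of $\pi$; $\pi_{|S}$ is a prefix of $\pi_{|T}$ if $S\subseteq T$ and the players of $S$ are the first $|S|$ players of $\pi_{|T}$. Let $C^{t-1}$ be the coalition structure of the players arrived before time $t$ ($C^0=\emptyset$). At time $t$, player $\pi_t$ either joins an existing coalition $S\in C^{t-1}$ or forms the new coalition $\{\pi_t\}$ (choice $S=\emptyset$); decisions are never revised. A distribution policy $\varphi$ assigns to every $S\subseteq N$ and order $\pi_{|S}$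 a vector $(\varphi_i(S,\pi_{|S}\mid v))_{i\in S}$, and is non-wasteful: $\sum_{i\in S}\varphi_i(S,\pi_{|S})=v(S)$. It is irrevocable if for every $\pi$, every $S\subseteq T\subseteq N$ with $\pi_{|S}$ a prefix of $\pi_{|T}$, and every $i\in S$, $\varphi_i(S,\pi_{|S})\le\varphi_i(T,\pi_{|T})$ (value given to a player is never reduced when later players join). Greedy players: player $\pi_t$ chooses $S^*\in\arg\max_{S\in C^{t-1}\cup\{\emptyset\}}\varphi_{\pi_t}(S\cup\{\pi_t\},\pi_{|S\cup\{\pi_t\}})$ (ties broken by a predetermined rule). $C_g(v,\pi\mid\varphi)$ denotes the final coalition structure so formed. The competitive ratio of $\varphi$ over a class of characteristic functions is $\alpha=\inf_{v,\pi}\mathsf{SW}(C_g(v,\pi\mid\varphi))/\max_C\mathsf{SW}(C\mid v)$, the infimum over $v$ in the class and all arrival orders $\pi$. *)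

theory Defs
  imports Complex_Main "HOL-Library.Disjoint_Sets"
begin

definition in_V :: "nat \<Rightarrow> real \<Rightarrow> real \<Rightarrow> 'a set \<Rightarrow> ('a set \<Rightarrow> real) \<Rightarrow> bool" where
  "in_V \<delta> mn mx N v \<longleftrightarrow>
     0 < mn \<and> mn \<le> mx \<and> v {} = 0 \<and>
     (\<forall>S T. S \<noteq> {} \<longrightarrow> S \<subseteq> T \<longrightarrow> T \<subseteq> N \<longrightarrow> mn \<le> v S \<and> v S \<le> v T \<and> v T \<le> mx) \<and>
     real \<delta> * mn \<le> mx \<and> mx < (real \<delta> + 1) * mn"

text \<open>A distribution policy phi gives, for each characteristic function v, each coalition
  S together with an order of its players (a distinct list xs with set xs = S) and each
  player i, the value phi v xs i.\<close>
definition non_wasteful :: "'a set \<Rightarrow> ('a set \<Rightarrow> real) \<Rightarrow> ('a list \<Rightarrow> 'a \<Rightarrow> real) \<Rightarrow> bool" where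
  "non_wasteful N v \<phi> \<longleftrightarrow>
     (\<forall>xs. distinct xs \<longrightarrow> set xs \<subseteq> N \<longrightarrow> (\<Sum>i\<in>set xs. \<phi> xs i) = v (set xs))"

definition irrevocable :: "'a set \<Rightarrow> ('a list \<Rightarrow> 'a \<Rightarrow> real) \<Rightarrow> bool" where
  "irrevocable N \<phi> \<longleftrightarrow>
     (\<forall>ys k i. distinct ys \<longrightarrow> set ys \<subseteq> N \<longrightarrow> i \<in> set (take k ys) \<longrightarrow>
        \<phi> (take k ys) i \<le> \<phi> ys i)"

text \<open>Greedy runs: greedy_run phi xs C means that after the players of xs have arrived
  (in this order), the coalition structure C (each coalition listed in arrival order)
  can be formed by greedy players (for some tie-breaking rule).\<close>
inductive greedy_run :: "('a list \<Rightarrow> 'a \<Rightarrow> real) \<Rightarrow> 'a list \<Rightarrow> 'a list list \<Rightarrow> bool"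
  for \<phi> :: "'a list \<Rightarrow> 'a \<Rightarrow> real" where
  start: "greedy_run \<phi> [] []"
| new: "greedy_run \<phi> xs C \<Longrightarrow>
          (\<forall>S\<in>set C. \<phi> (S @ [p]) p \<le> \<phi> [p] p) \<Longrightarrow>
          greedy_run \<phi> (xs @ [p]) (C @ [[p]])"
| join: "greedy_run \<phi> xs C \<Longrightarrow> j < length C \<Longrightarrow>
          \<phi> [p] p \<le> \<phi> (C ! j @ [p]) p \<Longrightarrow>
          (\<forall>S\<in>set C. \<phi> (S @ [p]) p \<le> \<phi> (C ! j @ [p]) p) \<Longrightarrow>
          greedy_run \<phi> (xs @ [p]) (C[j := C ! j @ [p]])"

definition SW :: "('a set \<Rightarrow> real) \<Rightarrow> 'a list list \<Rightarrow> real" where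
  "SW v C = (\<Sum>S\<leftarrow>C. v (set S))"

end

theory Submission
  imports Defs
begin

text \<open>Since \<open>max < 2 min\<close> in \<open>V\<^sub>1\<close>, a coalition of two or more players is worth less than the
  sum of its members' singleton values. Hence a player joining a lone player \<open>q\<close> gets at most
  \<open>v {q, p} - v {q} \<le> max - min < min \<le> v {p}\<close> (irrevocability keeps \<open>q\<close>'s share at least
  \<open>v {q}\<close>), so greedy players always stay alone, and the all-singletons structure dominates
  every partition.\<close>

lemma in_V_one_bounds:
  assumes "in_V 1 mn mx N v" and "S \<subseteq> N" "S \<noteq> {}"
  shows "mn \<le> v S" "v S \<le> mx" "mx < 2 * mn" "0 < mn"
  using assms unfolding in_V_def by auto

lemma non_wasteful_singleton:
  assumes "non_wasteful N v f" and "p \<in> N"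
  shows "f [p] p = v {p}"
  using assms unfolding non_wasteful_def by (erule_tac x = "[p]" in allE) simp

lemma non_wasteful_pair:
  assumes "non_wasteful N v f" and "p \<in> N" "q \<in> N" "p \<noteq> q"
  shows "f [q, p] q + f [q, p] p = v {q, p}"
  using assms unfolding non_wasteful_def by (erule_tac x = "[q, p]" in allE) auto

lemma irrevocable_pair:
  assumes "irrevocable N f" and "p \<in> N" "q \<in> N" "p \<noteq> q"
  shows "f [q] q \<le> f [q, p] q"
  using assms unfolding irrevocable_def
  by (erule_tac x = "[q, p]" in allE, erule_tac x = 1 in allE, erule_tac x = q in allE) auto

lemma joining_singleton_unprofitable:
  assumes V: "in_V 1 mn mx N v" and nw: "non_wasteful N v f" and irr: "irrevocable N f"
    and "p \<in> N" "q \<in> N" "p \<noteq> q"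
  shows "f [q, p] p < f [p] p"
proof -
  have "f [q, p] p = v {q, p} - f [q, p] q"
    using non_wasteful_pair[OF nw assms(4-6)] by simp
  also have "\<dots> \<le> v {q, p} - v {q}"
    using irrevocable_pair[OF irr] non_wasteful_singleton[OF nw] assms(4-6) by simp
  also have "\<dots> < v {p}"
    using in_V_one_bounds[OF V, of "{q, p}"] in_V_one_bounds[OF V, of "{q}"]
      in_V_one_bounds[OF V, of "{p}"] assms(4-6) by simp
  finally show ?thesis
    using non_wasteful_singleton[OF nw] assms(4) by simp
qed

lemma greedy_run_singletons:
  assumes V: "in_V 1 mn mx N v" and nw: "non_wasteful N v f" and irr: "irrevocable N f"
  shows "greedy_run f xs C \<Longrightarrow> distinct xs \<Longrightarrow> set xs \<subseteq> N \<Longrightarrow> C = map (\<lambda>p. [p]) xs"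
proof (induction rule: greedy_run.induct)
  case start
  then show ?case by simp
next
  case (new xs C p)
  then show ?case by simp
next
  case (join xs C j p)
  then have C: "C = map (\<lambda>p. [p]) xs" by simp
  define q where "q = xs ! j"
  have "j < length xs" using join C by simp
  then have "C ! j = [q]" "q \<in> set xs" using C q_def by simp_all
  moreover have "p \<in> N" "q \<in> N" "p \<noteq> q" using join \<open>q \<in> set xs\<close> by auto
  ultimately have "f (C ! j @ [p]) p < f [p] p"
    using joining_singleton_unprofitable[OF V nw irr] by simp
  with join show ?case by simp
qed

lemma in_V_one_le_sum_singletons:
  assumes V: "in_V 1 mn mx N v" and "S \<subseteq> N" "S \<noteq> {}" "finite S"
  shows "v S \<le> (\<Sum>p\<in>S. v {p})"
proof (cases "card S = 1")
  case True
  then obtain p where "S = {p}" by (rule card_1_singletonE)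
  then show ?thesis by simp
next
  case False
  moreover have "0 < card S" using assms(3,4) by (simp add: card_gt_0_iff)
  ultimately have "2 \<le> card S" by linarith
  have "v S \<le> mx" "mx < 2 * mn" "0 < mn"
    using in_V_one_bounds[OF V] assms(2,3) by simp_all
  moreover have "2 * mn \<le> real (card S) * mn"
    using \<open>2 \<le> card S\<close> \<open>0 < mn\<close> by simp
  moreover have "real (card S) * mn \<le> (\<Sum>p\<in>S. v {p})"
  proof -
    have "\<And>p. p \<in> S \<Longrightarrow> mn \<le> v {p}"
      using in_V_one_bounds(1)[OF V] assms(2) by blast
    then show ?thesis using sum_mono[of S "\<lambda>_. mn" "\<lambda>p. v {p}"] by simp
  qed
  ultimately show ?thesis by linarith
qed

lemma sum_partition_on:
  assumes "finite A" and "partition_on A P"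
  shows "(\<Sum>S\<in>P. \<Sum>p\<in>S. g p) = (\<Sum>p\<in>A. g p)"
proof -
  have "\<forall>S\<in>P. finite S" "\<forall>S\<in>P. \<forall>T\<in>P. S \<noteq> T \<longrightarrow> S \<inter> T = {}" "\<Union>P = A"
    using assms finite_subset[OF Union_upper]
    by (auto simp: partition_on_def disjoint_def)
  then show ?thesis
    using sum.Union_disjoint[of P g] by simp
qed

lemma SW_singletons:
  assumes "distinct xs"
  shows "SW v (map (\<lambda>p. [p]) xs) = (\<Sum>p\<in>set xs. v {p})"
  using assms by (simp add: SW_def o_def sum_list_distinct_conv_sum_set)

theorem theorem1:
  fixes N :: "'a set" and mn mx :: real
    and \<phi> :: "('a set \<Rightarrow> real) \<Rightarrow> 'a list \<Rightarrow> 'a \<Rightarrow> real"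
    and v :: "'a set \<Rightarrow> real" and \<pi> :: "'a list" and C :: "'a list list"
  assumes "finite N"
    and "in_V 1 mn mx N v"
    and "non_wasteful N v (\<phi> v)"
    and "irrevocable N (\<phi> v)"
    and "distinct \<pi>" and "set \<pi> = N"
    and "greedy_run (\<phi> v) \<pi> C"
  shows "\<forall>P. partition_on N P \<longrightarrow> (\<Sum>S\<in>P. v S) \<le> SW v C"
proof (intro allI impI)
  fix P assume P: "partition_on N P"
  have "(\<Sum>S\<in>P. v S) \<le> (\<Sum>S\<in>P. \<Sum>p\<in>S. v {p})"
  proof (rule sum_mono)
    fix S assume "S \<in> P"
    with P assms(1) have "S \<subseteq> N" "S \<noteq> {}" "finite S"
      by (auto simp: partition_on_def intro: finite_subset)
    then show "v S \<le> (\<Sum>p\<in>S. v {p})"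
      using in_V_one_le_sum_singletons[OF assms(2)] by simp
  qed
  also have "\<dots> = (\<Sum>p\<in>N. v {p})"
    using sum_partition_on[OF assms(1) P] .
  also have "\<dots> = SW v C"
    using greedy_run_singletons[OF assms(2-4) assms(7,5)] SW_singletons[OF assms(5)] assms(6)
    by simp
  finally show "(\<Sum>S\<in>P. v S) \<le> SW v C" .
qed

end
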